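(* Let $n\ge2$ be an integer. The number of pairs of disjoint matrices in $\Sigma_{n^2}$ equals the number of pairs of disjoint matrices in $\Pi_n$.
   Context: $\Sigma_{n^2}$ is the set of all $n^2\times n^2$ permutation matrices (binary matrices with exactly one 1 in every row and every column) which, when partitioned into an $n\times n$ array of $n\times n$ blocks, have exactly one entry equal to 1 in each block; $A=[a_{ij}],B=[b_{ij}]\in\Sigma_{n^2}$ are disjoint if there are no $i,j$ with $a_{ij}=b_{ij}=1$. $\Pi_n$ is the set of all $n\times n$ matrices whose entries are ordered pairs $\langle a,b\rangle$ with $a,b\in\{1,\dots,n\}$ such that in every row the first components, read in order, form a permutation of $\{1,\dots,n\}$, and in every column the second components, read in order, form a permutation of $\{1,\dots,n\}$; $\pi'=[p'_{ij}],\pi''=[p''_{ij}]\in\Pi_n$ are disjoint if $p'_{ij}\ne p''_{ij}$ for all $i,j$. *)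

theory Defs
  imports Main
begin

text \<open>Matrices are indexed from 0. An N x N binary matrix is a function
  nat => nat => bool (True meaning entry 1), required to be False outside
  the index range {0..<N} x {0..<N} so that the set of matrices is finite.\<close>

definition perm_matrix :: "nat \<Rightarrow> (nat \<Rightarrow> nat \<Rightarrow> bool) \<Rightarrow> bool" where
  "perm_matrix N A \<longleftrightarrow>
     (\<forall>i j. A i j \<longrightarrow> i < N \<and> j < N) \<and>
     (\<forall>i<N. \<exists>!j. j < N \<and> A i j) \<and>
     (\<forall>j<N. \<exists>!i. i < N \<and> A i j)"

definition Sigma_sq :: "nat \<Rightarrow> (nat \<Rightarrow> nat \<Rightarrow> bool) set" where
  "Sigma_sq n = {A. perm_matrix (n^2) A \<and>
     (\<forall>I<n. \<forall>J<n. \<exists>!p. fst p \<in> {I*n..<I*n+n} \<and> snd p \<in> {J*n..<J*n+n}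
                        \<and> A (fst p) (snd p))}"

definition disjoint_Sigma :: "(nat \<Rightarrow> nat \<Rightarrow> bool) \<Rightarrow> (nat \<Rightarrow> nat \<Rightarrow> bool) \<Rightarrow> bool" where
  "disjoint_Sigma A B \<longleftrightarrow> (\<nexists>i j. A i j \<and> B i j)"

definition Pi_set :: "nat \<Rightarrow> (nat \<Rightarrow> nat \<Rightarrow> nat \<times> nat) set" where
  "Pi_set n = {P. (\<forall>i j. \<not> (i < n \<and> j < n) \<longrightarrow> P i j = (0, 0)) \<and>
     (\<forall>i<n. \<forall>j<n. fst (P i j) \<in> {1..n} \<and> snd (P i j) \<in> {1..n}) \<and>
     (\<forall>i<n. bij_betw (\<lambda>j. fst (P i j)) {0..<n} {1..n}) \<and>
     (\<forall>j<n. bij_betw (\<lambda>i. snd (P i j)) {0..<n} {1..n})}"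

definition disjoint_Pi :: "nat \<Rightarrow> (nat \<Rightarrow> nat \<Rightarrow> nat \<times> nat) \<Rightarrow> (nat \<Rightarrow> nat \<Rightarrow> nat \<times> nat) \<Rightarrow> bool" where
  "disjoint_Pi n P Q \<longleftrightarrow> (\<forall>i<n. \<forall>j<n. P i j \<noteq> Q i j)"

end

theory Submission
  imports Defs
begin

text \<open>Blowing up each entry \<langle>a, b\<rangle> of a matrix in \<Pi>_n into an n \<times> n block with its
  single 1 in position (a, b) is a bijection from \<Pi>_n onto \<Sigma>_{n^2}: the row condition on
  first components says that every row of the blown-up matrix contains exactly one 1, the column
  condition on second components says the same for columns, and the inverse reads off the
  position of the 1 in each block. Two matrices of \<Pi>_n agree at (I, J) exactly when their
  blow-ups share a 1 in block (I, J), so the bijection maps disjoint pairs onto disjoint pairs.\<close>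

lemma block_index_less_square_iff:
  fixes I a n :: nat
  assumes "a < n"
  shows "I * n + a < n^2 \<longleftrightarrow> I < n"
proof
  assume "I * n + a < n^2"
  then show "I < n" by (metis add_lessD1 mult_less_cancel2 power2_eq_square)
next
  assume "I < n"
  then have "I * n + a < (I + 1) * n" using assms by simp
  also have "\<dots> \<le> n * n" using \<open>I < n\<close> by (intro mult_right_mono) auto
  finally show "I * n + a < n^2" by (simp add: power2_eq_square)
qed

lemma less_square_iff_block_index:
  fixes i n :: nat
  shows "i < n^2 \<longleftrightarrow> (\<exists>I<n. \<exists>a<n. i = I * n + a)"
proof
  assume "i < n^2"
  then have "n > 0" by (auto intro: gr0I)
  then have "i mod n < n" by simp
  moreover from this have "i div n < n"
    using \<open>i < n^2\<close> block_index_less_square_iff[of "i mod n" n "i div n"] by simp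
  ultimately show "\<exists>I<n. \<exists>a<n. i = I * n + a"
    by (metis div_mult_mod_eq)
qed (auto simp: block_index_less_square_iff)

lemma block_index_div_mod [simp]:
  fixes n :: nat
  assumes "a < n"
  shows "(I * n + a) div n = I" "(I * n + a) mod n = a"
  using assms by auto

lemma in_block_iff:
  fixes x I n :: nat
  shows "x \<in> {I * n..<I * n + n} \<longleftrightarrow> (\<exists>a<n. x = I * n + a)"
  by (auto intro: exI[of _ "x - I * n"])

lemma inj_on_card_eq_imp_bij_betw:
  assumes "finite B" "inj_on f A" "f ` A \<subseteq> B" "card A = card B"
  shows "bij_betw f A B"
  using assms card_subset_eq[of B "f ` A"] by (simp add: bij_betw_def card_image)

lemma ex1_inj_image_iff:
  assumes "inj f"
  shows "(\<exists>!y. \<exists>x. y = f x \<and> R x) \<longleftrightarrow> (\<exists>!x. R x)"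
  using assms by (auto dest: injD)

lemma perm_matrix_transpose:
  "perm_matrix N (\<lambda>i j. A j i) \<longleftrightarrow> perm_matrix N A"
  unfolding perm_matrix_def by (rule iffI; elim conjE; intro conjI; (assumption | blast))

lemma perm_matrix_row_unique:
  assumes "perm_matrix N A" "A i j" "A i j'"
  shows "j = j'"
proof -
  have "i < N" "j < N" "j' < N"
    using assms unfolding perm_matrix_def by auto
  moreover have "\<forall>i<N. \<exists>!j. j < N \<and> A i j"
    using assms(1) unfolding perm_matrix_def by (elim conjE)
  ultimately show ?thesis
    using assms(2,3) by blast
qed

lemma perm_matrix_col_unique:
  assumes "perm_matrix N A" "A i j" "A i' j"
  shows "i = i'"
  using perm_matrix_row_unique[OF perm_matrix_transpose[THEN iffD2, OF assms(1)]] assms(2,3) .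

lemma Sigma_sq_iff:
  "A \<in> Sigma_sq n \<longleftrightarrow> perm_matrix (n^2) A \<and>
     (\<forall>I<n. \<forall>J<n. \<exists>!(a, b). a < n \<and> b < n \<and> A (I * n + a) (J * n + b))"
proof -
  have "(\<exists>!p. fst p \<in> {I*n..<I*n+n} \<and> snd p \<in> {J*n..<J*n+n} \<and> A (fst p) (snd p))
    \<longleftrightarrow> (\<exists>!(a, b). a < n \<and> b < n \<and> A (I * n + a) (J * n + b))" for I J
  proof -
    have "fst p \<in> {I*n..<I*n+n} \<and> snd p \<in> {J*n..<J*n+n} \<and> A (fst p) (snd p) \<longleftrightarrow>
      (\<exists>ab. p = map_prod ((+) (I * n)) ((+) (J * n)) ab \<and>
        (case ab of (a, b) \<Rightarrow> a < n \<and> b < n \<and> A (I * n + a) (J * n + b)))" for p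
      unfolding in_block_iff by (cases p) auto
    moreover have "inj (map_prod ((+) (I * n)) ((+) (J * n)))"
      by (auto simp: inj_def)
    ultimately show ?thesis
      by (simp only: ex1_inj_image_iff)
  qed
  then show ?thesis by (simp add: Sigma_sq_def)
qed

text \<open>Components of entries of \<Pi>_n are 1-based, offsets inside a block 0-based, hence the Suc.\<close>

definition blow_up :: "nat \<Rightarrow> (nat \<Rightarrow> nat \<Rightarrow> nat \<times> nat) \<Rightarrow> nat \<Rightarrow> nat \<Rightarrow> bool" where
  "blow_up n P i j \<longleftrightarrow>
     i < n^2 \<and> j < n^2 \<and> P (i div n) (j div n) = (Suc (i mod n), Suc (j mod n))"

lemma blow_up_block:
  assumes "a < n" "b < n"
  shows "blow_up n P (I * n + a) (J * n + b) \<longleftrightarrow> I < n \<and> J < n \<and> P I J = (Suc a, Suc b)"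
  using assms by (simp add: blow_up_def block_index_less_square_iff)

lemma blow_up_transpose:
  "blow_up n (\<lambda>i j. prod.swap (P j i)) i j \<longleftrightarrow> blow_up n P j i"
  by (cases "P (j div n) (i div n)") (auto simp: blow_up_def)

lemma Pi_set_transpose:
  "P \<in> Pi_set n \<Longrightarrow> (\<lambda>i j. prod.swap (P j i)) \<in> Pi_set n"
  unfolding Pi_set_def by (simp add: prod_eq_iff) blast

lemma Pi_set_entry:
  assumes "P \<in> Pi_set n" "I < n" "J < n"
  obtains a b where "a < n" "b < n" "P I J = (Suc a, Suc b)"
proof -
  have "fst (P I J) \<in> {1..n}" "snd (P I J) \<in> {1..n}"
    using assms by (auto simp: Pi_set_def)
  then show ?thesis
    using that[of "fst (P I J) - 1" "snd (P I J) - 1"] by (cases "P I J") auto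
qed

lemma blow_up_row_unique:
  assumes P: "P \<in> Pi_set n" and "i < n^2"
  shows "\<exists>!j. j < n^2 \<and> blow_up n P i j"
proof -
  obtain I a where I: "I < n" "a < n" "i = I * n + a"
    using \<open>i < n^2\<close> by (auto simp: less_square_iff_block_index)
  have row: "bij_betw (\<lambda>j. fst (P I j)) {0..<n} {1..n}"
    using P I by (simp add: Pi_set_def)
  moreover have "Suc a \<in> {1..n}"
    using I by simp
  ultimately obtain J where J: "J < n" "fst (P I J) = Suc a"
    by (force simp: bij_betw_def)
  obtain a' b where "b < n" "P I J = (Suc a', Suc b)"
    using Pi_set_entry[OF P I(1) J(1)] .
  with J have PIJ: "P I J = (Suc a, Suc b)" by simp
  show ?thesis
  proof (rule ex1I)
    show "J * n + b < n^2 \<and> blow_up n P i (J * n + b)"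
      using I J PIJ \<open>b < n\<close> by (auto simp: blow_up_block less_square_iff_block_index)
  next
    fix j assume j: "j < n^2 \<and> blow_up n P i j"
    then obtain J' b' where J': "J' < n" "b' < n" "j = J' * n + b'"
      by (auto simp: less_square_iff_block_index)
    then have "P I J' = (Suc a, Suc b')"
      using j I blow_up_block by simp
    moreover have "J' = J"
      using row J J' \<open>P I J' = (Suc a, Suc b')\<close> by (auto simp: bij_betw_def inj_on_def)
    ultimately show "j = J * n + b"
      using PIJ J' by simp
  qed
qed

lemma blow_up_in_Sigma_sq:
  assumes P: "P \<in> Pi_set n"
  shows "blow_up n P \<in> Sigma_sq n"
proof -
  have col: "\<exists>!i. i < n^2 \<and> blow_up n P i j" if "j < n^2" for j
    using blow_up_row_unique[OF Pi_set_transpose[OF P] that] by (simp add: blow_up_transpose)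
  have "perm_matrix (n^2) (blow_up n P)"
    unfolding perm_matrix_def using blow_up_row_unique[OF P] col by (simp add: blow_up_def)
  moreover have "\<exists>!(a, b). a < n \<and> b < n \<and> blow_up n P (I * n + a) (J * n + b)"
    if IJ: "I < n" "J < n" for I J
  proof -
    obtain a b where "a < n" "b < n" "P I J = (Suc a, Suc b)"
      using Pi_set_entry[OF P IJ] .
    then show ?thesis
      using IJ by (intro ex1I[of _ "(a, b)"]) (auto simp: blow_up_block)
  qed
  ultimately show ?thesis
    by (simp add: Sigma_sq_iff)
qed

definition contract :: "nat \<Rightarrow> (nat \<Rightarrow> nat \<Rightarrow> bool) \<Rightarrow> nat \<Rightarrow> nat \<Rightarrow> nat \<times> nat" where
  "contract n A I J =
     (if I < n \<and> J < n
      then map_prod Suc Suc (THE (a, b). a < n \<and> b < n \<and> A (I * n + a) (J * n + b))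
      else (0, 0))"

lemma contract_block:
  assumes A: "A \<in> Sigma_sq n" and IJ: "I < n" "J < n"
  shows "contract n A I J = (Suc a, Suc b) \<longleftrightarrow> a < n \<and> b < n \<and> A (I * n + a) (J * n + b)"
proof -
  define Q where "Q = (\<lambda>(a, b). a < n \<and> b < n \<and> A (I * n + a) (J * n + b))"
  have unique: "\<exists>!ab. Q ab"
    using A IJ unfolding Q_def by (simp add: Sigma_sq_iff)
  have "contract n A I J = (Suc a, Suc b) \<longleftrightarrow> map_prod Suc Suc (The Q) = (Suc a, Suc b)"
    using IJ by (simp add: contract_def Q_def)
  also have "\<dots> \<longleftrightarrow> The Q = (a, b)"
    by (cases "The Q") simp
  also have "\<dots> \<longleftrightarrow> Q (a, b)"
    using theI'[OF unique] the1_equality[OF unique] by metis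
  finally show ?thesis
    by (simp add: Q_def)
qed

lemma contract_entry:
  assumes "A \<in> Sigma_sq n" "I < n" "J < n"
  obtains a b where "a < n" "b < n" "A (I * n + a) (J * n + b)" "contract n A I J = (Suc a, Suc b)"
proof -
  have "\<exists>!(a, b). a < n \<and> b < n \<and> A (I * n + a) (J * n + b)"
    using assms by (simp add: Sigma_sq_iff)
  then obtain a b where "a < n" "b < n" "A (I * n + a) (J * n + b)"
    by (auto dest: ex1_implies_ex)
  then show ?thesis
    using that contract_block[OF assms] by blast
qed

lemma contract_row_inj:
  assumes A: "A \<in> Sigma_sq n" and I: "I < n"
  shows "inj_on (\<lambda>J. fst (contract n A I J)) {0..<n}"
proof (rule inj_onI)
  fix J1 J2
  assume "J1 \<in> {0..<n}" "J2 \<in> {0..<n}" and eq: "fst (contract n A I J1) = fst (contract n A I J2)"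
  then obtain a1 b1 a2 b2 where
    "b1 < n" "A (I * n + a1) (J1 * n + b1)" "contract n A I J1 = (Suc a1, Suc b1)"
    "b2 < n" "A (I * n + a2) (J2 * n + b2)" "contract n A I J2 = (Suc a2, Suc b2)"
    using contract_entry[OF A I] by (metis atLeastLessThan_iff)
  moreover have "perm_matrix (n^2) A"
    using A by (simp add: Sigma_sq_iff)
  ultimately have "J1 * n + b1 = J2 * n + b2"
    using eq perm_matrix_row_unique by fastforce
  then show "J1 = J2"
    using \<open>b1 < n\<close> \<open>b2 < n\<close> by (metis block_index_div_mod(1))
qed

lemma contract_col_inj:
  assumes A: "A \<in> Sigma_sq n" and J: "J < n"
  shows "inj_on (\<lambda>I. snd (contract n A I J)) {0..<n}"
proof (rule inj_onI)
  fix I1 I2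
  assume "I1 \<in> {0..<n}" "I2 \<in> {0..<n}" and eq: "snd (contract n A I1 J) = snd (contract n A I2 J)"
  then obtain a1 b1 a2 b2 where
    "a1 < n" "A (I1 * n + a1) (J * n + b1)" "contract n A I1 J = (Suc a1, Suc b1)"
    "a2 < n" "A (I2 * n + a2) (J * n + b2)" "contract n A I2 J = (Suc a2, Suc b2)"
    using contract_entry[OF A _ J] by (metis atLeastLessThan_iff)
  moreover have "perm_matrix (n^2) A"
    using A by (simp add: Sigma_sq_iff)
  ultimately have "I1 * n + a1 = I2 * n + a2"
    using eq perm_matrix_col_unique by fastforce
  then show "I1 = I2"
    using \<open>a1 < n\<close> \<open>a2 < n\<close> by (metis block_index_div_mod(1))
qed

lemma contract_in_Pi_set:
  assumes A: "A \<in> Sigma_sq n"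
  shows "contract n A \<in> Pi_set n"
proof -
  have range: "fst (contract n A I J) \<in> {1..n} \<and> snd (contract n A I J) \<in> {1..n}"
    if IJ: "I < n" "J < n" for I J
  proof -
    obtain a b where "a < n" "b < n" "contract n A I J = (Suc a, Suc b)"
      using contract_entry[OF A IJ] by blast
    then show ?thesis by simp
  qed
  have rows: "bij_betw (\<lambda>J. fst (contract n A I J)) {0..<n} {1..n}" if "I < n" for I
    using range contract_row_inj[OF A that] that by (intro inj_on_card_eq_imp_bij_betw) auto
  have cols: "bij_betw (\<lambda>I. snd (contract n A I J)) {0..<n} {1..n}" if "J < n" for J
    using range contract_col_inj[OF A that] that by (intro inj_on_card_eq_imp_bij_betw) auto
  have "\<forall>i j. \<not> (i < n \<and> j < n) \<longrightarrow> contract n A i j = (0, 0)"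
    by (simp add: contract_def)
  then show ?thesis
    unfolding Pi_set_def using range rows cols by simp
qed

lemma blow_up_contract:
  assumes A: "A \<in> Sigma_sq n"
  shows "blow_up n (contract n A) = A"
proof (intro ext)
  fix i j
  show "blow_up n (contract n A) i j = A i j"
  proof (cases "i < n^2 \<and> j < n^2")
    case True
    then obtain I a J b where "I < n" "a < n" "i = I * n + a" "J < n" "b < n" "j = J * n + b"
      by (auto simp: less_square_iff_block_index)
    then show ?thesis
      using contract_block[OF A] by (simp add: blow_up_block)
  next
    case False
    moreover have "perm_matrix (n^2) A"
      using A by (simp add: Sigma_sq_iff)
    ultimately show ?thesis
      by (auto simp: blow_up_def perm_matrix_def)
  qed
qed

lemma contract_blow_up:
  assumes P: "P \<in> Pi_set n"
  shows "contract n (blow_up n P) = P"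
proof (intro ext)
  fix I J
  show "contract n (blow_up n P) I J = P I J"
  proof (cases "I < n \<and> J < n")
    case True
    then obtain a b where "a < n" "b < n" "P I J = (Suc a, Suc b)"
      using Pi_set_entry[OF P] by blast
    then show ?thesis
      using True contract_block[OF blow_up_in_Sigma_sq[OF P]] by (simp add: blow_up_block)
  next
    case False
    moreover from this have "P I J = (0, 0)"
      using P by (simp add: Pi_set_def)
    ultimately show ?thesis
      by (auto simp: contract_def)
  qed
qed

lemma blow_up_disjoint_iff:
  assumes "P \<in> Pi_set n" "Q \<in> Pi_set n"
  shows "disjoint_Sigma (blow_up n P) (blow_up n Q) \<longleftrightarrow> disjoint_Pi n P Q"
proof -
  have "(\<exists>i j. blow_up n P i j \<and> blow_up n Q i j) \<longleftrightarrow> (\<exists>I<n. \<exists>J<n. P I J = Q I J)"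
  proof
    assume "\<exists>i j. blow_up n P i j \<and> blow_up n Q i j"
    then obtain i j where ij: "blow_up n P i j" "blow_up n Q i j"
      by blast
    then obtain I a J b where "a < n" "b < n" "i = I * n + a" "j = J * n + b"
      by (auto simp: blow_up_def less_square_iff_block_index)
    with ij have "I < n" "J < n" "P I J = Q I J"
      by (simp_all add: blow_up_block)
    then show "\<exists>I<n. \<exists>J<n. P I J = Q I J"
      by blast
  next
    assume "\<exists>I<n. \<exists>J<n. P I J = Q I J"
    then obtain I J a b where "I < n" "J < n" "a < n" "b < n" "P I J = (Suc a, Suc b)" "Q I J = P I J"
      using Pi_set_entry[OF assms(1)] by metis
    then have "blow_up n P (I * n + a) (J * n + b) \<and> blow_up n Q (I * n + a) (J * n + b)"
      by (simp add: blow_up_block)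
    then show "\<exists>i j. blow_up n P i j \<and> blow_up n Q i j"
      by blast
  qed
  then show ?thesis
    by (auto simp: disjoint_Sigma_def disjoint_Pi_def)
qed

theorem corollary3:
  fixes n :: nat
  assumes "n \<ge> 2"
  shows "card {(A, B). A \<in> Sigma_sq n \<and> B \<in> Sigma_sq n \<and> disjoint_Sigma A B}
       = card {(P, Q). P \<in> Pi_set n \<and> Q \<in> Pi_set n \<and> disjoint_Pi n P Q}"
proof -
  have "bij_betw (map_prod (blow_up n) (blow_up n))
          {(P, Q). P \<in> Pi_set n \<and> Q \<in> Pi_set n \<and> disjoint_Pi n P Q}
          {(A, B). A \<in> Sigma_sq n \<and> B \<in> Sigma_sq n \<and> disjoint_Sigma A B}"
    by (rule bij_betw_byWitness[where f' = "map_prod (contract n) (contract n)"])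
      (auto simp: contract_blow_up blow_up_contract blow_up_in_Sigma_sq contract_in_Pi_set
        blow_up_disjoint_iff[symmetric])
  then show ?thesis
    by (rule bij_betw_same_card[symmetric])
qed

end
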